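(* Let $m,n\ge1$, $a\in(0,\infty)^m$, $b\in(0,\infty)^n$, and let $\Omega$ be a real $m\times n$ matrix. The operators $T_1,T_2$ map the interior of $\tilde{\mathcal A}$ into the interior of $\tilde{\mathcal A}$. Moreover, for $(A,B)$ in the interior of $\tilde{\mathcal A}$, letting $\tilde{\mathcal A}_{(-,B)}=\{(A',B)\in\tilde{\mathcal A}\}$ and $\tilde{\mathcal A}_{(A,-)}=\{(A,B')\in\tilde{\mathcal A}\}$: (1) $T_1(A,B)$ is the unique point of $\tilde{\mathcal A}_{(-,B)}$ attaining $\sup_{(A',B)\in\tilde{\mathcal A}_{(-,B)}}F(A',B)$; (2) $T_2(A,B)$ is the unique point of $\tilde{\mathcal A}_{(A,-)}$ attaining $\sup_{(A,B')\in\tilde{\mathcal A}_{(A,-)}}F(A,B')$.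
   Context: $\mathcal A$ is the set of pairs $(A,B)$ of $(m+1)\times(n+1)$ real matrices (indices $i=0,\dots,m$, $j=0,\dots,n$) with: $A_{ij},B_{ij}\ge0$; $a_i=\sum_{j=0}^nA_{ij}$ for $i=1,\dots,m$; $A_{0j}=0$ for all $j$; $b_j=\sum_{i=0}^mB_{ij}$ for $j=1,\dots,n$; $B_{i0}=0$ for all $i$. $F(A,B)=\sum_{i=1}^m\sum_{j=1}^n\sqrt{A_{ij}B_{ij}}\,\Omega_{ij}$. $\tilde{\mathcal A}\subset\mathcal A$ consists of those $(A,B)$ with: (1) $A_{ij}=B_{ij}=0$ whenever $i,j\ge1$ and $\Omega_{ij}\le0$; (2) for $j\ge1$, $B_{0j}=0$ if there is $i\ge1$ with $\Omega_{ij}>0$; (3) for $i\ge1$, $A_{i0}=0$ if there is $j\ge1$ with $\Omega_{ij}>0$. $T_1(A,B)=(E,B)$ where $E_{ij}=A_{ij}$ if $i=0$ or $j=0$, and otherwise $E_{ij}=a_iB_{ij}\Omega_{ij}^2/\sum_{k=1}^nB_{ik}\Omega_{ik}^2$ if this denominator is positive and $0$ otherwise. $T_2(A,B)=(A,E)$ where $E_{ij}=B_{ij}$ if $i=0$ or $j=0$, and otherwise $E_{ij}=b_jA_{ij}\Omega_{ij}^2/\sum_{k=1}^mA_{kj}\Omega_{kj}^2$ if this denominator is positive and $0$ otherwise. "Interior" refers to the interior of the convex set $\tilde{\mathcal A}$ relative to the affine space it spans. *)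

theory Defs
  imports "HOL-Analysis.Analysis"
begin

text \<open>Index conventions: rows of the (m+1)x(n+1) matrices are indexed by the type
  'm option, where None plays the role of index 0 and Some i the indices 1..m
  (with m = CARD('m) \<ge> 1); similarly columns by 'n option.\<close>

type_synonym ('m, 'n) mat = "real ^ ('n option) ^ ('m option)"

definition AA :: "real ^ 'm \<Rightarrow> real ^ 'n \<Rightarrow> (('m::finite, 'n::finite) mat \<times> ('m, 'n) mat) set" where
  "AA a b = {(A, B).
      (\<forall>i j. A $ i $ j \<ge> 0 \<and> B $ i $ j \<ge> 0) \<and>
      (\<forall>i. a $ i = (\<Sum>j\<in>UNIV. A $ Some i $ j)) \<and>
      (\<forall>j. A $ None $ j = 0) \<and>
      (\<forall>j. b $ j = (\<Sum>i\<in>UNIV. B $ i $ Some j)) \<and>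
      (\<forall>i. B $ i $ None = 0)}"

definition F :: "real ^ 'n ^ 'm \<Rightarrow> ('m::finite, 'n::finite) mat \<times> ('m, 'n) mat \<Rightarrow> real" where
  "F \<Omega> AB = (\<Sum>i\<in>UNIV. \<Sum>j\<in>UNIV.
      sqrt (fst AB $ Some i $ Some j * snd AB $ Some i $ Some j) * \<Omega> $ i $ j)"

definition AAt :: "real ^ 'm \<Rightarrow> real ^ 'n \<Rightarrow> real ^ 'n ^ 'm
    \<Rightarrow> (('m::finite, 'n::finite) mat \<times> ('m, 'n) mat) set" where
  "AAt a b \<Omega> = {(A, B) \<in> AA a b.
      (\<forall>i j. \<Omega> $ i $ j \<le> 0 \<longrightarrow> A $ Some i $ Some j = 0 \<and> B $ Some i $ Some j = 0) \<and>
      (\<forall>j. (\<exists>i. \<Omega> $ i $ j > 0) \<longrightarrow> B $ None $ Some j = 0) \<and>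
      (\<forall>i. (\<exists>j. \<Omega> $ i $ j > 0) \<longrightarrow> A $ Some i $ None = 0)}"

definition T1 :: "real ^ 'm \<Rightarrow> real ^ 'n ^ 'm \<Rightarrow> ('m::finite, 'n::finite) mat \<times> ('m, 'n) mat
    \<Rightarrow> ('m, 'n) mat \<times> ('m, 'n) mat" where
  "T1 a \<Omega> AB = (let A = fst AB; B = snd AB in
     ((\<chi> i j. case (i, j) of
         (Some i', Some j') \<Rightarrow>
            (let d = (\<Sum>k\<in>UNIV. B $ Some i' $ Some k * (\<Omega> $ i' $ k)\<^sup>2) in
             if d > 0 then a $ i' * B $ Some i' $ Some j' * (\<Omega> $ i' $ j')\<^sup>2 / d else 0)
       | _ \<Rightarrow> A $ i $ j), B))"

definition T2 :: "real ^ 'n \<Rightarrow> real ^ 'n ^ 'm \<Rightarrow> ('m::finite, 'n::finite) mat \<times> ('m, 'n) mat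
    \<Rightarrow> ('m, 'n) mat \<times> ('m, 'n) mat" where
  "T2 b \<Omega> AB = (let A = fst AB; B = snd AB in
     (A, (\<chi> i j. case (i, j) of
         (Some i', Some j') \<Rightarrow>
            (let d = (\<Sum>k\<in>UNIV. A $ Some k $ Some j' * (\<Omega> $ k $ j')\<^sup>2) in
             if d > 0 then b $ j' * A $ Some i' $ Some j' * (\<Omega> $ i' $ j')\<^sup>2 / d else 0)
       | _ \<Rightarrow> B $ i $ j)))"

end

theory Submission
  imports Defs
begin

(* For fixed B the objective separates over the rows i of A: row i contributes
   \<Sum>_j sqrt(A_ij) c_ij with c_ij = sqrt(B_ij) \<Omega>_ij, and A ranges over the simplex of
   mass a_i on the entries allowed in that row.  By Cauchy-Schwarz such a row is at most
   sqrt(a_i \<Sum>_j c_ij^2), with equality exactly for A_ij = a_i c_ij^2 / \<Sum>_k c_ik^2, which is T_1.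
   The constraint set is the product of an A-set and a B-set, and its relative interior consists of
   the points that are strictly positive at every entry not forced to vanish (a linear
   functional nonnegative on a convex set is positive on its relative interior as soon as it
   is positive somewhere).  T_1 keeps these entries positive, so it preserves the relative
   interior.  Transposing all matrices exchanges the roles of A and B and turns T_2 into T_1. *)

lemma sum_sqrt_mult_le:
  fixes x c :: "'a \<Rightarrow> real"
  assumes "\<And>j. j \<in> I \<Longrightarrow> 0 \<le> x j"
  shows "(\<Sum>j\<in>I. sqrt (x j) * c j) \<le> sqrt (sum x I * (\<Sum>j\<in>I. (c j)\<^sup>2))"
proof -
  have "(\<Sum>j\<in>I. sqrt (x j) * c j)\<^sup>2 \<le> (\<Sum>j\<in>I. (sqrt (x j))\<^sup>2) * (\<Sum>j\<in>I. (c j)\<^sup>2)"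
    by (rule Cauchy_Schwarz_ineq_sum)
  also have "(\<Sum>j\<in>I. (sqrt (x j))\<^sup>2) = sum x I"
    using assms by (intro sum.cong) auto
  finally show ?thesis
    by (rule real_le_rsqrt)
qed

lemma sum_sqrt_mult_eq_sqrt_iff:
  fixes x c :: "'a \<Rightarrow> real"
  assumes "finite I" and x: "\<And>j. j \<in> I \<Longrightarrow> 0 \<le> x j" and c: "\<And>j. j \<in> I \<Longrightarrow> 0 \<le> c j"
    and D: "0 < (\<Sum>j\<in>I. (c j)\<^sup>2)"
  shows "(\<Sum>j\<in>I. sqrt (x j) * c j) = sqrt (sum x I * (\<Sum>j\<in>I. (c j)\<^sup>2)) \<longleftrightarrow>
         (\<forall>j\<in>I. x j = sum x I * (c j)\<^sup>2 / (\<Sum>j\<in>I. (c j)\<^sup>2))"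
proof -
  define s where "s = sum x I"
  define D where "D = (\<Sum>j\<in>I. (c j)\<^sup>2)"
  define l where "l = sqrt (s / D)"
  have "0 \<le> s" and "0 < D"
    using x D by (simp_all add: s_def D_def sum_nonneg)
  then have l2: "l\<^sup>2 = s / D" and lD: "l * D = sqrt (s * D)"
    by (simp_all add: l_def real_sqrt_divide real_sqrt_mult field_simps)
  have "(\<Sum>j\<in>I. sqrt (x j) * c j) = sqrt (s * D) \<longleftrightarrow> (\<forall>j\<in>I. x j = s * (c j)\<^sup>2 / D)"
  proof
    assume eq: "(\<Sum>j\<in>I. sqrt (x j) * c j) = sqrt (s * D)"
    \<comment> \<open>the defect in Cauchy-Schwarz is the squared distance of sqrt x from the multiple l c of c\<close>
    have "(\<Sum>j\<in>I. (sqrt (x j) - l * c j)\<^sup>2)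
        = (\<Sum>j\<in>I. x j - 2 * l * (sqrt (x j) * c j) + l\<^sup>2 * (c j)\<^sup>2)"
      using x by (intro sum.cong) (auto simp: power2_diff power_mult_distrib)
    also have "\<dots> = s - 2 * l * sqrt (s * D) + l\<^sup>2 * D"
      by (simp add: sum.distrib sum_subtractf s_def D_def eq flip: sum_distrib_left)
    also have "\<dots> = 0"
      using l2 \<open>0 < D\<close> by (simp flip: lD) (simp add: power2_eq_square flip: mult.assoc)
    finally have "\<forall>j\<in>I. sqrt (x j) = l * c j"
      using \<open>finite I\<close> by (simp add: sum_nonneg_eq_0_iff)
    then show "\<forall>j\<in>I. x j = s * (c j)\<^sup>2 / D"
      using x l2 by (metis power_mult_distrib real_sqrt_pow2 times_divide_eq_left mult.commute)
  next
    assume "\<forall>j\<in>I. x j = s * (c j)\<^sup>2 / D"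
    then have "(\<Sum>j\<in>I. sqrt (x j) * c j) = (\<Sum>j\<in>I. l * (c j)\<^sup>2)"
      using c by (intro sum.cong) (auto simp: l_def real_sqrt_mult real_sqrt_divide power2_eq_square)
    also have "\<dots> = l * D"
      by (simp add: D_def sum_distrib_left)
    finally show "(\<Sum>j\<in>I. sqrt (x j) * c j) = sqrt (s * D)"
      by (simp only: lD)
  qed
  then show ?thesis
    by (simp add: s_def D_def)
qed

definition unique_maximizer :: "('a \<Rightarrow> real) \<Rightarrow> 'a set \<Rightarrow> 'a \<Rightarrow> bool" where
  "unique_maximizer f P z \<longleftrightarrow> z \<in> P \<and> (\<forall>p \<in> P - {z}. f p < f z)"

lemma unique_maximizer_SUP:
  assumes "unique_maximizer f P z"
  shows "z \<in> P \<and> f z = (SUP p\<in>P. f p) \<and> (\<forall>p\<in>P. f p = (SUP q\<in>P. f q) \<longrightarrow> p = z)"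
proof -
  have "f p \<le> f z" if "p \<in> P" for p
    using assms that by (cases "p = z") (auto simp: unique_maximizer_def less_imp_le)
  then have "(SUP p\<in>P. f p) = f z"
    using assms by (intro cSup_eq_maximum) (auto simp: unique_maximizer_def)
  then show ?thesis
    using assms unfolding unique_maximizer_def by (metis DiffI less_irrefl singletonD)
qed

lemma unique_maximizer_image:
  assumes "unique_maximizer f P z" and "inj_on h P" and "\<And>p. p \<in> P \<Longrightarrow> g (h p) = f p"
  shows "unique_maximizer g (h ` P) (h z)"
  using assms unfolding unique_maximizer_def inj_on_def by fastforce

lemma linear_pos_on_rel_interior:
  fixes S :: "'a::euclidean_space set" and f :: "'a \<Rightarrow> real"
  assumes "convex S" and "linear f" and nonneg: "\<And>z. z \<in> S \<Longrightarrow> 0 \<le> f z"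
    and "y \<in> S" and "0 < f y" and x: "x \<in> rel_interior S"
  shows "0 < f x"
proof (cases "y = x")
  case False
  have "y \<in> affine hull S"
    using \<open>y \<in> S\<close> by (rule hull_inc)
  then obtain m where "1 < m" and m: "\<forall>e. 1 < e \<and> e \<le> m \<longrightarrow> (1 - e) *\<^sub>R y + e *\<^sub>R x \<in> S"
    using convex_rel_interior_if[OF \<open>convex S\<close> x] by auto
  then have "0 \<le> f ((1 - m) *\<^sub>R y + m *\<^sub>R x)"
    using nonneg by auto
  also have "\<dots> = (1 - m) * f y + m * f x"
    using \<open>linear f\<close> by (simp add: linear_add linear_scale)
  finally have "(m - 1) * f y \<le> m * f x"
    by (simp add: algebra_simps)
  moreover have "0 < (m - 1) * f y"
    using \<open>1 < m\<close> \<open>0 < f y\<close> by simp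
  ultimately have "0 < m * f x"
    by linarith
  then show ?thesis
    using \<open>1 < m\<close> by (simp add: zero_less_mult_iff)
qed (use \<open>0 < f y\<close> in simp)

lemma mem_rel_interior_if_pos:
  fixes S :: "'a::euclidean_space set" and g :: "'k \<Rightarrow> 'a \<Rightarrow> real"
  assumes "finite K" and "\<And>k. k \<in> K \<Longrightarrow> continuous_on UNIV (g k)"
    and "x \<in> S" and "\<And>k. k \<in> K \<Longrightarrow> 0 < g k x"
    and "\<And>y. y \<in> affine hull S \<Longrightarrow> \<forall>k\<in>K. 0 \<le> g k y \<Longrightarrow> y \<in> S"
  shows "x \<in> rel_interior S"
  unfolding mem_rel_interior
proof (intro exI conjI)
  show "open (\<Inter>k\<in>K. {y. 0 < g k y})"
    using assms(1,2) by (auto intro!: open_Collect_less)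
  show "x \<in> (\<Inter>k\<in>K. {y. 0 < g k y}) \<inter> S"
    using assms(3,4) by blast
  show "(\<Inter>k\<in>K. {y. 0 < g k y}) \<inter> affine hull S \<subseteq> S"
    by (intro subsetI assms(5)) (auto simp: less_imp_le)
qed

lemma sum_UNIV_option: "(\<Sum>q\<in>UNIV. f q) = f None + (\<Sum>j\<in>UNIV. f (Some j))"
  for f :: "'a::finite option \<Rightarrow> 'b::comm_monoid_add"
  by (simp add: UNIV_option_conv sum.reindex)

lemma bounded_linear_transpose: "bounded_linear (transpose :: real ^ 'n ^ 'm \<Rightarrow> _)"
  unfolding linear_conv_bounded_linear[symmetric]
  by (rule linearI) (simp_all add: transpose_def vec_eq_iff)

lemma inj_transpose: "inj transpose"
  by (metis injI transpose_transpose)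

lemma image_transpose: "transpose ` S = {X. transpose X \<in> S}"
  by (auto simp: image_iff) (metis transpose_transpose)

definition AAt_support :: "real ^ 'n ^ 'm \<Rightarrow> 'm::finite option \<Rightarrow> 'n::finite option \<Rightarrow> bool" where
  "AAt_support \<Omega> p q \<longleftrightarrow> (case (p, q) of
      (Some i, Some j) \<Rightarrow> 0 < \<Omega> $ i $ j
    | (Some i, None) \<Rightarrow> (\<forall>j. \<Omega> $ i $ j \<le> 0)
    | (None, _) \<Rightarrow> False)"

lemma AAt_support_simps [simp]:
  "\<not> AAt_support \<Omega> None q"
  "AAt_support \<Omega> (Some i) (Some j) \<longleftrightarrow> 0 < \<Omega> $ i $ j"
  "AAt_support \<Omega> (Some i) None \<longleftrightarrow> (\<forall>j. \<Omega> $ i $ j \<le> 0)"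
  by (simp_all add: AAt_support_def)

definition AAt_fst :: "real ^ 'm \<Rightarrow> real ^ 'n ^ 'm \<Rightarrow> ('m::finite, 'n::finite) mat set" where
  "AAt_fst a \<Omega> = {A. (\<forall>p q. 0 \<le> A $ p $ q \<and> (\<not> AAt_support \<Omega> p q \<longrightarrow> A $ p $ q = 0)) \<and>
                      (\<forall>i. (\<Sum>q\<in>UNIV. A $ Some i $ q) = a $ i)}"

definition AAt_snd :: "real ^ 'n \<Rightarrow> real ^ 'n ^ 'm \<Rightarrow> ('m::finite, 'n::finite) mat set" where
  "AAt_snd b \<Omega> = {B. transpose B \<in> AAt_fst b (transpose \<Omega>)}"

lemma AAt_eq_Times: "AAt a b \<Omega> = AAt_fst a \<Omega> \<times> AAt_snd b \<Omega>"
  unfolding AAt_def AA_def AAt_fst_def AAt_snd_def AAt_support_def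
  by (auto simp: transpose_def split: option.splits) (metis not_le option.exhaust)+

lemma AAt_snd_eq_image: "AAt_snd b \<Omega> = transpose ` AAt_fst b (transpose \<Omega>)"
  by (simp add: AAt_snd_def image_transpose)

lemma convex_AAt_fst: "convex (AAt_fst a \<Omega>)"
  unfolding convex_def AAt_fst_def
  by (auto simp: sum.distrib simp flip: sum_distrib_left distrib_right)

lemma convex_AAt_snd: "convex (AAt_snd b \<Omega>)"
  unfolding AAt_snd_eq_image
  by (intro convex_linear_image convex_AAt_fst bounded_linear.linear[OF bounded_linear_transpose])

lemma AAt_fstD:
  assumes "A \<in> AAt_fst a \<Omega>"
  shows "0 \<le> A $ p $ q" and "\<not> AAt_support \<Omega> p q \<Longrightarrow> A $ p $ q = 0"
  using assms by (simp_all add: AAt_fst_def)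

lemma AAt_fst_row_sum:
  assumes "A \<in> AAt_fst a \<Omega>"
  shows "A $ Some i $ None + (\<Sum>j\<in>UNIV. A $ Some i $ Some j) = a $ i"
  using assms by (simp add: AAt_fst_def flip: sum_UNIV_option)

lemma AAt_fst_eqI:
  assumes X: "X \<in> AAt_fst a \<Omega>" and Y: "Y \<in> AAt_fst a \<Omega>"
    and XY: "\<And>i j. X $ Some i $ Some j = Y $ Some i $ Some j"
  shows "X = Y"
proof -
  have "X $ p $ q = Y $ p $ q" for p q
  proof (cases p)
    case None
    then show ?thesis
      using AAt_fstD(2)[OF X] AAt_fstD(2)[OF Y] by simp
  next
    case (Some i)
    then show ?thesis
      using AAt_fst_row_sum[OF X, of i] AAt_fst_row_sum[OF Y, of i] XY
      by (cases q) simp_all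
  qed
  then show ?thesis
    by (simp add: vec_eq_iff)
qed

definition pos_pattern :: "real ^ 'n ^ 'm \<Rightarrow> ('m::finite, 'n::finite) mat \<Rightarrow> bool" where
  "pos_pattern \<Omega> X \<longleftrightarrow>
     (\<forall>i j. 0 \<le> X $ Some i $ Some j \<and> (0 < X $ Some i $ Some j \<longleftrightarrow> 0 < \<Omega> $ i $ j))"

lemma pos_patternD:
  assumes "pos_pattern \<Omega> X"
  shows "0 \<le> X $ Some i $ Some j" and "0 < \<Omega> $ i $ j \<Longrightarrow> 0 < X $ Some i $ Some j"
    and "\<not> 0 < \<Omega> $ i $ j \<Longrightarrow> X $ Some i $ Some j = 0"
  using assms by (auto simp: pos_pattern_def less_le)

lemma pos_pattern_transpose [simp]: "pos_pattern (transpose \<Omega>) X = pos_pattern \<Omega> (transpose X)"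
  by (auto simp: pos_pattern_def transpose_def)

lemma AAt_fst_has_positive_point:
  fixes a :: "real ^ 'm::finite" and \<Omega> :: "real ^ 'n::finite ^ 'm"
  assumes "\<forall>i. 0 < a $ i"
  obtains W where "W \<in> AAt_fst a \<Omega>" and "\<And>p q. AAt_support \<Omega> p q \<Longrightarrow> 0 < W $ p $ q"
proof
  define N where "N i = card {q. AAt_support \<Omega> (Some i) q}" for i
  have "0 < N i" for i
  proof -
    have "AAt_support \<Omega> (Some i) None \<or> (\<exists>j. AAt_support \<Omega> (Some i) (Some j))"
      by (auto simp: not_le)
    then have "{q. AAt_support \<Omega> (Some i) q} \<noteq> {}"
      by blast
    then show ?thesis
      unfolding N_def by (simp add: card_gt_0_iff)
  qed
  define W :: "('m, 'n) mat" where
    "W = (\<chi> p q. case p of None \<Rightarrow> 0 | Some i \<Rightarrow> if AAt_support \<Omega> p q then a $ i / N i else 0)"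
  have "(\<Sum>q\<in>UNIV. W $ Some i $ q) = a $ i" for i
  proof -
    have "(\<Sum>q\<in>UNIV. W $ Some i $ q) = (\<Sum>q\<in>{q. AAt_support \<Omega> (Some i) q}. a $ i / N i)"
      by (simp add: W_def flip: sum.inter_filter)
    also have "\<dots> = real (N i) * (a $ i / N i)"
      by (simp add: N_def)
    also have "\<dots> = a $ i"
      using \<open>0 < N i\<close> by simp
    finally show ?thesis .
  qed
  then show "W \<in> AAt_fst a \<Omega>"
    using assms by (auto simp: AAt_fst_def W_def less_imp_le split: option.splits)
  show "0 < W $ p $ q" if "AAt_support \<Omega> p q" for p q
    using that assms \<open>\<And>i. 0 < N i\<close> by (auto simp: W_def AAt_support_def split: option.splits)
qed

lemma AAt_fst_pos_on_support:
  assumes "\<forall>i. 0 < a $ i" and A: "A \<in> AAt_fst a \<Omega>" and "pos_pattern \<Omega> A"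
    and supp: "AAt_support \<Omega> p q"
  shows "0 < A $ p $ q"
proof (cases p)
  case (Some i)
  show ?thesis
  proof (cases q)
    case None
    then have "\<forall>j. A $ Some i $ Some j = 0"
      using supp \<open>pos_pattern \<Omega> A\<close> Some by (simp add: pos_patternD(3) not_less)
    then show ?thesis
      using AAt_fst_row_sum[OF A, of i] assms(1) Some None by simp
  qed (use supp \<open>pos_pattern \<Omega> A\<close> Some pos_patternD(2) in auto)
qed (use supp in simp)

lemma affine_hull_AAt_fst_subset:
  "affine hull (AAt_fst a \<Omega>) \<subseteq>
     {X. (\<forall>p q. \<not> AAt_support \<Omega> p q \<longrightarrow> X $ p $ q = 0) \<and> (\<forall>i. (\<Sum>q\<in>UNIV. X $ Some i $ q) = a $ i)}"
  by (rule hull_minimal)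
    (auto simp: AAt_fst_def affine_def sum.distrib simp flip: sum_distrib_left distrib_right)

lemma mem_rel_interior_AAt_fst:
  assumes "\<forall>i. 0 < a $ i" and "A \<in> AAt_fst a \<Omega>" and "pos_pattern \<Omega> A"
  shows "A \<in> rel_interior (AAt_fst a \<Omega>)"
proof (rule mem_rel_interior_if_pos[where K = "{(p, q). AAt_support \<Omega> p q}"
      and g = "\<lambda>k X. X $ fst k $ snd k"])
  show "y \<in> AAt_fst a \<Omega>"
    if hull: "y \<in> affine hull AAt_fst a \<Omega>"
      and nonneg: "\<forall>k\<in>{(p, q). AAt_support \<Omega> p q}. 0 \<le> y $ fst k $ snd k" for y
  proof -
    have y: "(\<forall>p q. \<not> AAt_support \<Omega> p q \<longrightarrow> y $ p $ q = 0) \<and> (\<forall>i. (\<Sum>q\<in>UNIV. y $ Some i $ q) = a $ i)"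
      using affine_hull_AAt_fst_subset hull by blast
    then have "0 \<le> y $ p $ q" for p q
      using nonneg by (cases "AAt_support \<Omega> p q") auto
    then show ?thesis
      using y by (simp add: AAt_fst_def)
  qed
qed (use assms AAt_fst_pos_on_support in \<open>auto intro!: continuous_intros\<close>)

lemma pos_pattern_if_rel_interior_AAt_fst:
  fixes a :: "real ^ 'm::finite" and \<Omega> :: "real ^ 'n::finite ^ 'm"
  assumes "\<forall>i. 0 < a $ i" and ri: "A \<in> rel_interior (AAt_fst a \<Omega>)"
  shows "pos_pattern \<Omega> A"
proof -
  have A: "A \<in> AAt_fst a \<Omega>"
    using ri rel_interior_subset by blast
  obtain W where W: "W \<in> AAt_fst a \<Omega>" and Wpos: "\<And>p q. AAt_support \<Omega> p q \<Longrightarrow> 0 < W $ p $ q"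
    using AAt_fst_has_positive_point[OF assms(1)] by blast
  have "0 < A $ Some i $ Some j" if "0 < \<Omega> $ i $ j" for i j
  proof (rule linear_pos_on_rel_interior[OF convex_AAt_fst _ _ W _ ri])
    show "linear (\<lambda>X :: ('m, 'n) mat. X $ Some i $ Some j)"
      by (rule linearI) simp_all
  qed (use that Wpos AAt_fstD(1) in auto)
  moreover have "A $ Some i $ Some j = 0" if "\<not> 0 < \<Omega> $ i $ j" for i j
    using AAt_fstD(2)[OF A] that by simp
  ultimately show ?thesis
    using AAt_fstD(1)[OF A] by (auto simp: pos_pattern_def) (metis less_irrefl)
qed

lemma rel_interior_AAt_fst:
  assumes "\<forall>i. 0 < a $ i"
  shows "rel_interior (AAt_fst a \<Omega>) = {A \<in> AAt_fst a \<Omega>. pos_pattern \<Omega> A}"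
  using mem_rel_interior_AAt_fst[OF assms] pos_pattern_if_rel_interior_AAt_fst[OF assms]
    rel_interior_subset by blast

lemma rel_interior_AAt_snd:
  assumes "\<forall>j. 0 < b $ j"
  shows "rel_interior (AAt_snd b \<Omega>) = {B \<in> AAt_snd b \<Omega>. pos_pattern \<Omega> B}"
proof -
  have "rel_interior (AAt_snd b \<Omega>) = transpose ` rel_interior (AAt_fst b (transpose \<Omega>))"
    unfolding AAt_snd_eq_image
    by (rule rel_interior_injective_linear_image[OF bounded_linear_transpose inj_transpose])
  also have "\<dots> = {B \<in> AAt_snd b \<Omega>. pos_pattern \<Omega> B}"
    by (simp add: rel_interior_AAt_fst[OF assms] AAt_snd_def image_transpose)
  finally show ?thesis .
qed

lemma rel_interior_AAt:
  assumes "\<forall>i. 0 < a $ i" and "\<forall>j. 0 < b $ j"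
  shows "rel_interior (AAt a b \<Omega>) =
    {(A, B). A \<in> AAt_fst a \<Omega> \<and> pos_pattern \<Omega> A \<and> B \<in> AAt_snd b \<Omega> \<and> pos_pattern \<Omega> B}"
  by (auto simp: AAt_eq_Times rel_interior_Times convex_AAt_fst convex_AAt_snd
      rel_interior_AAt_fst[OF assms(1)] rel_interior_AAt_snd[OF assms(2)])

lemma snd_T1 [simp]: "snd (T1 a \<Omega> x) = snd x"
  by (simp add: T1_def Let_def)

lemma fst_T1_nth [simp]:
  "fst (T1 a \<Omega> (A, B)) $ None $ q = A $ None $ q"
  "fst (T1 a \<Omega> (A, B)) $ Some i $ None = A $ Some i $ None"
  "fst (T1 a \<Omega> (A, B)) $ Some i $ Some j =
     (if 0 < (\<Sum>k\<in>UNIV. B $ Some i $ Some k * (\<Omega> $ i $ k)\<^sup>2)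
      then a $ i * B $ Some i $ Some j * (\<Omega> $ i $ j)\<^sup>2 / (\<Sum>k\<in>UNIV. B $ Some i $ Some k * (\<Omega> $ i $ k)\<^sup>2)
      else 0)"
  by (simp_all add: T1_def Let_def)

lemma T2_eq_T1_transpose:
  "T2 b \<Omega> (A, B) = (A, transpose (fst (T1 b (transpose \<Omega>) (transpose B, transpose A))))"
  by (simp add: T1_def T2_def transpose_def Let_def vec_eq_iff split: option.splits)

lemma F_transpose: "F (transpose \<Omega>) (transpose B, transpose A) = F \<Omega> (A, B)"
  unfolding F_def by (subst sum.swap) (simp add: transpose_def mult.commute)

lemma row_weight_pos_iff:
  assumes "pos_pattern \<Omega> B"
  shows "0 < (\<Sum>k\<in>UNIV. B $ Some i $ Some k * (\<Omega> $ i $ k)\<^sup>2) \<longleftrightarrow> (\<exists>j. 0 < \<Omega> $ i $ j)"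
proof
  assume "0 < (\<Sum>k\<in>UNIV. B $ Some i $ Some k * (\<Omega> $ i $ k)\<^sup>2)"
  then obtain k where "B $ Some i $ Some k * (\<Omega> $ i $ k)\<^sup>2 \<noteq> 0"
    by (metis (no_types, lifting) less_irrefl sum.neutral)
  then show "\<exists>j. 0 < \<Omega> $ i $ j"
    using pos_patternD(3)[OF assms] by auto
next
  assume "\<exists>j. 0 < \<Omega> $ i $ j"
  then obtain j where "0 < \<Omega> $ i $ j" ..
  then have "0 < B $ Some i $ Some j * (\<Omega> $ i $ j)\<^sup>2"
    using pos_patternD(2)[OF assms] by simp
  then show "0 < (\<Sum>k\<in>UNIV. B $ Some i $ Some k * (\<Omega> $ i $ k)\<^sup>2)"
    using pos_patternD(1)[OF assms] by (intro sum_pos2[where i = j]) auto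
qed

lemma T1_fst_mem:
  assumes a: "\<forall>i. 0 \<le> a $ i" and A: "A \<in> AAt_fst a \<Omega>" and B: "pos_pattern \<Omega> B"
  shows "fst (T1 a \<Omega> (A, B)) \<in> AAt_fst a \<Omega>"
proof -
  define E where "E = fst (T1 a \<Omega> (A, B))"
  define D where "D i = (\<Sum>k\<in>UNIV. B $ Some i $ Some k * (\<Omega> $ i $ k)\<^sup>2)" for i
  have E: "E $ Some i $ Some j = (if 0 < D i then a $ i * B $ Some i $ Some j * (\<Omega> $ i $ j)\<^sup>2 / D i else 0)"
    for i j by (simp add: E_def D_def)
  have E0: "E $ Some i $ None = A $ Some i $ None" for i
    by (simp add: E_def)
  have "0 \<le> E $ p $ q \<and> (\<not> AAt_support \<Omega> p q \<longrightarrow> E $ p $ q = 0)" for p q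
  proof (cases p)
    case (Some i)
    then show ?thesis
      using AAt_fstD[OF A] a pos_patternD[OF B] by (cases q) (auto simp: E E0)
  qed (use AAt_fstD[OF A] in \<open>simp add: E_def\<close>)
  moreover have "(\<Sum>q\<in>UNIV. E $ Some i $ q) = a $ i" for i
  proof (cases "0 < D i")
    case True
    then have "A $ Some i $ None = 0"
      using AAt_fstD(2)[OF A, of "Some i" None] row_weight_pos_iff[OF B]
      by (auto simp: D_def not_le)
    moreover have "(\<Sum>j\<in>UNIV. E $ Some i $ Some j) = a $ i * D i / D i"
      using True by (simp add: E D_def mult.assoc flip: sum_divide_distrib sum_distrib_left)
    ultimately show ?thesis
      using True by (simp add: sum_UNIV_option E0)
  next
    case False
    then have "\<forall>j. \<Omega> $ i $ j \<le> 0"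
      using row_weight_pos_iff[OF B] by (auto simp: D_def not_less)
    then have "\<forall>j. A $ Some i $ Some j = 0"
      by (simp add: AAt_fstD(2)[OF A] not_less)
    then show ?thesis
      using False AAt_fst_row_sum[OF A, of i] by (simp add: sum_UNIV_option E E0)
  qed
  ultimately show ?thesis
    by (simp add: AAt_fst_def E_def)
qed

lemma T1_fst_pos_pattern:
  assumes a: "\<forall>i. 0 < a $ i" and B: "pos_pattern \<Omega> B"
  shows "pos_pattern \<Omega> (fst (T1 a \<Omega> (A, B)))"
  unfolding pos_pattern_def
proof (intro allI)
  fix i j
  define D where "D = (\<Sum>k\<in>UNIV. B $ Some i $ Some k * (\<Omega> $ i $ k)\<^sup>2)"
  have "0 < \<Omega> $ i $ j \<Longrightarrow> 0 < D"
    using row_weight_pos_iff[OF B] by (auto simp: D_def)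
  moreover have "0 \<le> D"
    using pos_patternD(1)[OF B] by (auto simp: D_def intro: sum_nonneg)
  ultimately show "0 \<le> fst (T1 a \<Omega> (A, B)) $ Some i $ Some j \<and>
      (0 < fst (T1 a \<Omega> (A, B)) $ Some i $ Some j \<longleftrightarrow> 0 < \<Omega> $ i $ j)"
    using a B by (auto simp: D_def[symmetric] pos_pattern_def less_le)
qed

definition F_row :: "real ^ 'n ^ 'm \<Rightarrow> ('m::finite, 'n::finite) mat \<Rightarrow> ('m, 'n) mat \<Rightarrow> 'm \<Rightarrow> real" where
  "F_row \<Omega> A B i = (\<Sum>j\<in>UNIV. sqrt (A $ Some i $ Some j * B $ Some i $ Some j) * \<Omega> $ i $ j)"

lemma F_eq_sum_F_row: "F \<Omega> (A, B) = (\<Sum>i\<in>UNIV. F_row \<Omega> A B i)"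
  by (simp add: F_def F_row_def)

lemma T1_fst_row_max:
  assumes a: "\<forall>i. 0 \<le> a $ i" and A: "A \<in> AAt_fst a \<Omega>" and B: "pos_pattern \<Omega> B"
    and X: "X \<in> AAt_fst a \<Omega>"
  defines "E \<equiv> fst (T1 a \<Omega> (A, B))"
  shows "F_row \<Omega> X B i \<le> F_row \<Omega> E B i"
    and "F_row \<Omega> X B i = F_row \<Omega> E B i \<Longrightarrow> X $ Some i $ Some j = E $ Some i $ Some j"
proof -
  define c where "c j = sqrt (B $ Some i $ Some j) * \<Omega> $ i $ j" for j
  define D where "D = (\<Sum>j\<in>UNIV. (c j)\<^sup>2)"
  have E_mem: "E \<in> AAt_fst a \<Omega>"
    unfolding E_def using a A B by (rule T1_fst_mem)
  have F_row_eq: "F_row \<Omega> Y B i = (\<Sum>j\<in>UNIV. sqrt (Y $ Some i $ Some j) * c j)" for Y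
    by (simp add: F_row_def c_def real_sqrt_mult mult.assoc)
  have c_nonneg: "0 \<le> c j" for j
    using pos_patternD[OF B, of i j] by (cases "0 < \<Omega> $ i $ j") (auto simp: c_def)
  have c_sq: "(c j)\<^sup>2 = B $ Some i $ Some j * (\<Omega> $ i $ j)\<^sup>2" for j
    using pos_patternD(1)[OF B] by (simp add: c_def power_mult_distrib)
  have E_nth: "E $ Some i $ Some j = (if 0 < D then a $ i * (c j)\<^sup>2 / D else 0)" for j
    by (simp add: E_def D_def c_sq mult.assoc)
  have "F_row \<Omega> X B i \<le> F_row \<Omega> E B i \<and>
      (F_row \<Omega> X B i = F_row \<Omega> E B i \<longrightarrow> (\<forall>j. X $ Some i $ Some j = E $ Some i $ Some j))"
  proof (cases "0 < D")
    case True
    have row_sum: "(\<Sum>j\<in>UNIV. Y $ Some i $ Some j) = a $ i" if "Y \<in> AAt_fst a \<Omega>" for Y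
      using AAt_fst_row_sum[OF that, of i] AAt_fstD(2)[OF that, of "Some i" None] True
        row_weight_pos_iff[OF B, of i] by (force simp: D_def c_sq not_le)
    have CS_le: "F_row \<Omega> Y B i \<le> sqrt (a $ i * D)" if "Y \<in> AAt_fst a \<Omega>" for Y
      using sum_sqrt_mult_le[of UNIV "\<lambda>j. Y $ Some i $ Some j" c] AAt_fstD(1)[OF that]
      by (simp add: F_row_eq D_def row_sum[OF that])
    have CS_eq: "F_row \<Omega> Y B i = sqrt (a $ i * D) \<longleftrightarrow> (\<forall>j. Y $ Some i $ Some j = E $ Some i $ Some j)"
      if "Y \<in> AAt_fst a \<Omega>" for Y
      using sum_sqrt_mult_eq_sqrt_iff[of UNIV "\<lambda>j. Y $ Some i $ Some j" c]
        AAt_fstD(1)[OF that] c_nonneg True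
      by (simp add: F_row_eq D_def row_sum[OF that] E_nth)
    show ?thesis
      using CS_le[OF X] CS_eq[OF X] CS_eq[OF E_mem] by simp
  next
    case False
    then have \<Omega>_nonpos: "\<not> 0 < \<Omega> $ i $ j" for j
      using row_weight_pos_iff[OF B, of i] by (auto simp: D_def c_sq)
    then have "c j = 0" for j
      by (simp add: c_def pos_patternD(3)[OF B])
    then show ?thesis
      using \<Omega>_nonpos False by (simp add: F_row_eq E_nth AAt_fstD(2)[OF X])
  qed
  then show "F_row \<Omega> X B i \<le> F_row \<Omega> E B i"
    and "F_row \<Omega> X B i = F_row \<Omega> E B i \<Longrightarrow> X $ Some i $ Some j = E $ Some i $ Some j"
    by auto
qed

lemma T1_fst_unique_maximizer:
  assumes a: "\<forall>i. 0 \<le> a $ i" and A: "A \<in> AAt_fst a \<Omega>" and B: "pos_pattern \<Omega> B"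
  shows "unique_maximizer (\<lambda>X. F \<Omega> (X, B)) (AAt_fst a \<Omega>) (fst (T1 a \<Omega> (A, B)))"
proof -
  define E where "E = fst (T1 a \<Omega> (A, B))"
  have E_mem: "E \<in> AAt_fst a \<Omega>"
    unfolding E_def using a A B by (rule T1_fst_mem)
  note row_max = T1_fst_row_max[OF a A B, folded E_def]
  have "F \<Omega> (X, B) < F \<Omega> (E, B)" if X: "X \<in> AAt_fst a \<Omega>" and "X \<noteq> E" for X
  proof -
    obtain i j where "X $ Some i $ Some j \<noteq> E $ Some i $ Some j"
      using AAt_fst_eqI[OF X E_mem] \<open>X \<noteq> E\<close> by blast
    then have "F_row \<Omega> X B i < F_row \<Omega> E B i"
      using row_max[OF X, of i] by (auto simp: less_le)
    then show ?thesis
      unfolding F_eq_sum_F_row using row_max(1)[OF X] by (intro sum_strict_mono_strong[of _ i]) auto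
  qed
  then show ?thesis
    using E_mem by (simp add: unique_maximizer_def E_def)
qed

lemma T1_rel_interior_unique_maximizer:
  assumes a: "\<forall>i. 0 < a $ i" and b: "\<forall>j. 0 < b $ j"
    and AB: "(A, B) \<in> rel_interior (AAt a b \<Omega>)"
  shows "T1 a \<Omega> (A, B) \<in> rel_interior (AAt a b \<Omega>)"
    and "unique_maximizer (F \<Omega>) {(A', B') \<in> AAt a b \<Omega>. B' = B} (T1 a \<Omega> (A, B))"
proof -
  have a0: "\<forall>i. 0 \<le> a $ i"
    using a less_imp_le by blast
  have A: "A \<in> AAt_fst a \<Omega>" and B: "B \<in> AAt_snd b \<Omega>" "pos_pattern \<Omega> B"
    using AB by (auto simp: rel_interior_AAt[OF a b])
  have T1: "T1 a \<Omega> (A, B) = (fst (T1 a \<Omega> (A, B)), B)"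
    by (simp add: prod_eq_iff)
  show "T1 a \<Omega> (A, B) \<in> rel_interior (AAt a b \<Omega>)"
    using T1_fst_mem[OF a0 A B(2)] T1_fst_pos_pattern[OF a B(2)] B
    by (subst T1) (simp add: rel_interior_AAt[OF a b])
  have "{(A', B') \<in> AAt a b \<Omega>. B' = B} = (\<lambda>X. (X, B)) ` AAt_fst a \<Omega>"
    using B by (auto simp: AAt_eq_Times)
  then show "unique_maximizer (F \<Omega>) {(A', B') \<in> AAt a b \<Omega>. B' = B} (T1 a \<Omega> (A, B))"
    using unique_maximizer_image[OF T1_fst_unique_maximizer[OF a0 A B(2)], of "\<lambda>X. (X, B)"]
    by (subst T1) (simp add: inj_on_def)
qed

lemma T2_rel_interior_unique_maximizer:
  assumes a: "\<forall>i. 0 < a $ i" and b: "\<forall>j. 0 < b $ j"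
    and AB: "(A, B) \<in> rel_interior (AAt a b \<Omega>)"
  shows "T2 b \<Omega> (A, B) \<in> rel_interior (AAt a b \<Omega>)"
    and "unique_maximizer (F \<Omega>) {(A', B') \<in> AAt a b \<Omega>. A' = A} (T2 b \<Omega> (A, B))"
proof -
  have b0: "\<forall>j. 0 \<le> b $ j"
    using b less_imp_le by blast
  have A: "A \<in> AAt_fst a \<Omega>" "pos_pattern (transpose \<Omega>) (transpose A)"
    and B: "transpose B \<in> AAt_fst b (transpose \<Omega>)"
    using AB by (auto simp: rel_interior_AAt[OF a b] AAt_snd_def)
  define E where "E = fst (T1 b (transpose \<Omega>) (transpose B, transpose A))"
  have T2: "T2 b \<Omega> (A, B) = (A, transpose E)"
    by (simp add: T2_eq_T1_transpose E_def)
  show "T2 b \<Omega> (A, B) \<in> rel_interior (AAt a b \<Omega>)"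
    using T1_fst_mem[OF b0 B A(2)] T1_fst_pos_pattern[OF b A(2)] A
    by (simp add: T2 rel_interior_AAt[OF a b] AAt_snd_def E_def)
  have "{(A', B') \<in> AAt a b \<Omega>. A' = A} = (\<lambda>Y. (A, transpose Y)) ` AAt_fst b (transpose \<Omega>)"
    using A by (auto simp: AAt_eq_Times AAt_snd_eq_image)
  moreover have "inj_on (\<lambda>Y. (A, transpose Y)) (AAt_fst b (transpose \<Omega>))"
    by (metis (mono_tags, lifting) inj_onI prod.inject transpose_transpose)
  ultimately show "unique_maximizer (F \<Omega>) {(A', B') \<in> AAt a b \<Omega>. A' = A} (T2 b \<Omega> (A, B))"
    using unique_maximizer_image[OF T1_fst_unique_maximizer[OF b0 B A(2)], of "\<lambda>Y. (A, transpose Y)"]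
      F_transpose[of \<Omega> "transpose _" A]
    by (simp add: T2 E_def)
qed

theorem lemma2p16:
  fixes a :: "real ^ 'm::finite" and b :: "real ^ 'n::finite" and \<Omega> :: "real ^ 'n ^ 'm"
  assumes "\<forall>i. a $ i > 0" and "\<forall>j. b $ j > 0"
  shows "(\<forall>x \<in> rel_interior (AAt a b \<Omega>).
            T1 a \<Omega> x \<in> rel_interior (AAt a b \<Omega>) \<and> T2 b \<Omega> x \<in> rel_interior (AAt a b \<Omega>))
       \<and> (\<forall>A B. (A, B) \<in> rel_interior (AAt a b \<Omega>) \<longrightarrow>
            (T1 a \<Omega> (A, B) \<in> {(A', B') \<in> AAt a b \<Omega>. B' = B} \<and>
             F \<Omega> (T1 a \<Omega> (A, B)) = (SUP p\<in>{(A', B') \<in> AAt a b \<Omega>. B' = B}. F \<Omega> p) \<and>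
             (\<forall>p \<in> {(A', B') \<in> AAt a b \<Omega>. B' = B}.
                F \<Omega> p = (SUP q\<in>{(A', B') \<in> AAt a b \<Omega>. B' = B}. F \<Omega> q) \<longrightarrow> p = T1 a \<Omega> (A, B)))
          \<and> (T2 b \<Omega> (A, B) \<in> {(A', B') \<in> AAt a b \<Omega>. A' = A} \<and>
             F \<Omega> (T2 b \<Omega> (A, B)) = (SUP p\<in>{(A', B') \<in> AAt a b \<Omega>. A' = A}. F \<Omega> p) \<and>
             (\<forall>p \<in> {(A', B') \<in> AAt a b \<Omega>. A' = A}.
                F \<Omega> p = (SUP q\<in>{(A', B') \<in> AAt a b \<Omega>. A' = A}. F \<Omega> q) \<longrightarrow> p = T2 b \<Omega> (A, B))))"
proof (rule conjI; intro ballI allI impI)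
  show "T1 a \<Omega> x \<in> rel_interior (AAt a b \<Omega>) \<and> T2 b \<Omega> x \<in> rel_interior (AAt a b \<Omega>)"
    if "x \<in> rel_interior (AAt a b \<Omega>)" for x
    using that T1_rel_interior_unique_maximizer(1)[OF assms] T2_rel_interior_unique_maximizer(1)[OF assms]
    by (metis prod.collapse)
qed (rule conjI; rule unique_maximizer_SUP; simp add: T1_rel_interior_unique_maximizer(2)[OF assms]
    T2_rel_interior_unique_maximizer(2)[OF assms])

end
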